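(* There are positive constants $c$ and $b$, not depending on $\varepsilon$, such that for every $t\ge0$, all integers $n>0$, $m\ge0$ and all initial positions $\underline x_0=(x_1,\dots,x_n)$, $\underline y_0=(y_1,\dots,y_{n+m})$ in $\Lambda_\varepsilon$, the coupled process started from $(\underline x_0,\{1,\dots,n\},\underline y_0,\{1,\dots,n+m\},n+m)$ satisfies $$\hat E\big[|D_{\ne}(t)|\big]\le c\,n\,e^{-b\varepsilon^2t},$$ where $D_{\ne}(t)=\{i\in I(t):x_i(t)\ne y_i(t)\}$ and $\hat E$ is expectation for the coupled process.
   Context: Fix $j>0$, $\varepsilon>0$ with $\varepsilon^{-1}\in\mathbb N$, $\Lambda_\varepsilon=\{0,\dots,\varepsilon^{-1}\}$. A labeled configuration is $(\underline x,I)$ with $I\subset\mathbb N$ finite, $x_i\in\Lambda_\varepsilon$. State space $S$: all $(\underline x,I,\underline y,J,N)$ with $I\subset J$, $|J\setminus I|\le m$, $N=\max J$. $I_==\{i\in I:x_i=y_i\}$. The coupled process is the Markov jump process on $S$ with jumps: (1) for each $i\in I\setminus I_=$ and sign $\pm$, at rate $1/2$, $x_i\to x_i\pm1$ (suppressed if outside $\Lambda_\varepsilon$); for each $i\in J\setminus I_=$ and sign, at rate $1/2$, $y_i\to y_i\pm1$ (suppressed if outside); (2) for each $i\in I_=$ and sign, at rate $1/2$, $x_i,y_i$ both move to $x_i\pm1$ (suppressed if outside); (3) at rate $\varepsilon j$: $N\to N+1$, label $N+1$ added to $I$ and $J$ with $x_{N+1}=y_{N+1}=0$; (4) at rate $\varepsilon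 j$: let $i$ be the largest label at the rightmost occupied site of $\underline x$ and $k$ the largest label at the rightmost occupied site of $\underline y$; remove $i$ from $\underline x,I$ and $k$ from $\underline y,J$; if $k\in I$ and $i\ne k$ then: if $x_k\le y_i$ relabel the $\underline y$-particle $i$ as $k$; otherwise relabel the $\underline x$-particle $k$ as $i$; $N$ unchanged. *)

theory Defs
  imports "HOL-Analysis.Analysis"
begin

text \<open>The expectation of a nonnegative observable f at time t, started at x, for the
  (minimal) Markov jump process with these rates, is defined as the supremum of the
  standard iterates of the backward integral equation (Norris, Markov Chains,
  Thm. 2.8.3/2.8.4):
    u_0(t,x)     = exp(-q(x) t) f(x)
    u_(n+1)(t,x) = exp(-q(x) t) f(x) + int_0^t exp(-q(x) s) sum_z q(x,z) u_n(t-s,z) ds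
  where q(x) is the total jump rate out of x.  u_n(t,x) = E_x[f(X_t); at most n jumps by t].\<close>

definition total_rate :: "('s \<Rightarrow> (real \<times> 's) list) \<Rightarrow> 's \<Rightarrow> real" where
  "total_rate Q s = sum_list (map fst (Q s))"

fun ctmc_iter :: "('s \<Rightarrow> (real \<times> 's) list) \<Rightarrow> ('s \<Rightarrow> ennreal) \<Rightarrow> nat \<Rightarrow> real \<Rightarrow> 's \<Rightarrow> ennreal" where
  "ctmc_iter Q f 0 t s = ennreal (exp (- total_rate Q s * t)) * f s"
| "ctmc_iter Q f (Suc n) t s =
     ennreal (exp (- total_rate Q s * t)) * f s
   + (\<integral>\<^sup>+ u. indicator {0..t} u * ennreal (exp (- total_rate Q s * u)) *
        sum_list (map (\<lambda>(r, z). ennreal r * ctmc_iter Q f n (t - u) z) (Q s)) \<partial>lborel)"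

definition ctmc_expect :: "('s \<Rightarrow> (real \<times> 's) list) \<Rightarrow> ('s \<Rightarrow> ennreal) \<Rightarrow> real \<Rightarrow> 's \<Rightarrow> ennreal" where
  "ctmc_expect Q f t s = (SUP n. ctmc_iter Q f n t s)"

text \<open>State (x, I, y, J, N): x, y give positions (only values on I resp. J are meaningful),
  I \<subseteq> J finite label sets, N the current maximal label. The lattice is
  Lambda_eps = {0..L} with L = 1/eps.\<close>

type_synonym cstate = "(nat \<Rightarrow> nat) \<times> nat set \<times> (nat \<Rightarrow> nat) \<times> nat set \<times> nat"

definition step_pos :: "nat \<Rightarrow> nat \<Rightarrow> bool \<Rightarrow> nat" where
  "step_pos L p up = (if up then (if p + 1 \<le> L then p + 1 else p) else (if 0 < p then p - 1 else p))"

definition rlab :: "(nat \<Rightarrow> nat) \<Rightarrow> nat set \<Rightarrow> nat" where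
  "rlab x I = Max {i \<in> I. x i = Max (x ` I)}"

definition equal_labels :: "cstate \<Rightarrow> nat set" where
  "equal_labels s = (case s of (x, I, y, J, N) \<Rightarrow> {i \<in> I. x i = y i})"

definition D_ne :: "cstate \<Rightarrow> nat set" where
  "D_ne s = (case s of (x, I, y, J, N) \<Rightarrow> {i \<in> I. x i \<noteq> y i})"

definition create :: "cstate \<Rightarrow> cstate" where
  "create s = (case s of (x, I, y, J, N) \<Rightarrow>
     (x(N + 1 := 0), I \<union> {N + 1}, y(N + 1 := 0), J \<union> {N + 1}, N + 1))"

text \<open>Removal rule (4). Convention when a configuration is empty: nothing is removed from it.\<close>
definition remove :: "cstate \<Rightarrow> cstate" where
  "remove s = (case s of (x, I, y, J, N) \<Rightarrow>
     (if I = {} then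
        (if J = {} then s else (x, I, y, J - {rlab y J}, N))
      else
        (let i = rlab x I; k = rlab y J; I' = I - {i}; J' = J - {k} in
          if k \<in> I \<and> i \<noteq> k then
            (if x k \<le> y i then (x, I', y(k := y i), (J' - {i}) \<union> {k}, N)
             else (x(i := x k), (I' - {k}) \<union> {i}, y, J', N))
          else (x, I', y, J', N))))"

definition coupled_jumps :: "nat \<Rightarrow> real \<Rightarrow> cstate \<Rightarrow> (real \<times> cstate) list" where
  "coupled_jumps L j s = (case s of (x, I, y, J, N) \<Rightarrow>
     (let Ieq = {i \<in> I. x i = y i} in
       concat (map (\<lambda>i. map (\<lambda>up. (1/2, (x(i := step_pos L (x i) up), I, y, J, N))) [True, False])
                   (sorted_list_of_set (I - Ieq)))
     @ concat (map (\<lambda>i. map (\<lambda>up. (1/2, (x, I, y(i := step_pos L (y i) up), J, N))) [True, False])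
                   (sorted_list_of_set (J - Ieq)))
     @ concat (map (\<lambda>i. map (\<lambda>up. (1/2, (x(i := step_pos L (x i) up), I,
                                            y(i := step_pos L (x i) up), J, N))) [True, False])
                   (sorted_list_of_set Ieq))
     @ [(j / real L, create s), (j / real L, remove s)]))"

end

theory Submission
  imports Defs
begin

(* A Foster-Lyapunov argument. Let Phi = sum over i in I of g(|x_i - y_i|), where g(0) = 0 and
   g(d) = 1 + d (2L + 2 - d) / (L + 1)^2 for d >= 1, so that 1 <= g <= 2 away from 0 and
   card D_ne <= Phi <= 2 |I|. Under the coupled dynamics Phi has drift at most -Phi / (L + 1)^2:
   the two copies of a discordant label perform independent walks and g is concave with second
   difference -2 / (L + 1)^2 (at d = 1 the jump of g at 0 helps even more); joint moves and
   creations do not increase Phi; and a relabelling at a removal replaces two discrepancies by a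
   single one bounded by their sum, because the removed particles are the rightmost ones.
   Iterating the backward equation gives E[card D_ne(t)] <= exp(-t / (L + 1)^2) Phi(0), and
   Phi(0) <= 2n, (L + 1)^2 <= 4 L^2. *)

lemma sum_list_ennreal_le:
  assumes "\<And>r z. (r, z) \<in> set xs \<Longrightarrow> 0 \<le> r \<and> 0 \<le> G z \<and> F z \<le> ennreal (G z)"
  shows "(\<Sum>(r, z)\<leftarrow>xs. ennreal r * F z) \<le> ennreal (\<Sum>(r, z)\<leftarrow>xs. r * G z)"
  using assms
proof (induction xs)
  case (Cons p xs)
  obtain r z where p: "p = (r, z)" by (cases p)
  have rz: "0 \<le> r" "0 \<le> G z" "F z \<le> ennreal (G z)" using Cons.prems p by auto
  have "ennreal r * F z \<le> ennreal r * ennreal (G z)"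
    using rz(3) by (rule mult_left_mono) simp
  also have "\<dots> = ennreal (r * G z)"
    using rz by (simp add: ennreal_mult)
  finally have head: "ennreal r * F z \<le> ennreal (r * G z)" .
  have tail: "(\<Sum>(r, z)\<leftarrow>xs. ennreal r * F z) \<le> ennreal (\<Sum>(r, z)\<leftarrow>xs. r * G z)"
    using Cons.prems by (intro Cons.IH) auto
  have "0 \<le> (\<Sum>(r, z)\<leftarrow>xs. r * G z)"
    using Cons.prems by (intro sum_list_nonneg) fastforce
  then have "ennreal (r * G z) + ennreal (\<Sum>(r, z)\<leftarrow>xs. r * G z)
      = ennreal (r * G z + (\<Sum>(r, z)\<leftarrow>xs. r * G z))"
    using rz by (simp add: ennreal_plus)
  with add_mono[OF head tail] show ?case by (simp add: p)
qed simp

lemma nn_integral_exp_decay: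
  fixes a c t :: real
  assumes "0 \<le> t" "0 \<le> a * c"
  shows "(\<integral>\<^sup>+u. ennreal (a * c * exp (- a * u)) * indicator {0..t} u \<partial>lborel)
         = ennreal (c - c * exp (- a * t))"
proof -
  define F where "F u = - c * exp (- a * u)" for u
  have "(F has_real_derivative a * c * exp (- a * u)) (at u within {0..t})" for u
    unfolding F_def by (auto intro!: derivative_eq_intros simp: algebra_simps)
  then have "((\<lambda>u. a * c * exp (- a * u)) has_integral (F t - F 0)) {0..t}"
    by (intro fundamental_theorem_of_calculus assms)
      (simp add: has_real_derivative_iff_has_vector_derivative)
  then have "(\<integral>\<^sup>+u. ennreal (a * c * exp (- a * u)) * indicator {0..t} u \<partial>lborel) = ennreal (F t - F 0)"
    using assms(2) by (intro nn_integral_has_integral_lebesgue') auto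
  then show ?thesis by (simp add: F_def)
qed

locale ctmc_lyapunov =
  fixes Q :: "'s \<Rightarrow> (real \<times> 's) list" and P :: "'s \<Rightarrow> bool" and V :: "'s \<Rightarrow> real" and b :: real
  assumes jump_closed: "P s \<Longrightarrow> (r, z) \<in> set (Q s) \<Longrightarrow> 0 \<le> r \<and> P z"
    and nonneg: "P s \<Longrightarrow> 0 \<le> V s"
    and drift: "P s \<Longrightarrow> (\<Sum>(r, z)\<leftarrow>Q s. r * (V z - V s)) \<le> - b * V s"
begin

lemma jump_sum_le: "P s \<Longrightarrow> (\<Sum>(r, z)\<leftarrow>Q s. r * V z) \<le> (total_rate Q s - b) * V s"
proof -
  have "(\<Sum>(r, z)\<leftarrow>xs. r * (V z - c)) = (\<Sum>(r, z)\<leftarrow>xs. r * V z) - sum_list (map fst xs) * c"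
    for xs :: "(real \<times> 's) list" and c
    by (induction xs) (auto simp: algebra_simps)
  from this[where xs="Q s" and c="V s"] show "P s \<Longrightarrow> ?thesis"
    using drift[of s] unfolding total_rate_def by (simp add: algebra_simps)
qed

lemma jump_sum_nonneg: "P s \<Longrightarrow> 0 \<le> (\<Sum>(r, z)\<leftarrow>Q s. r * V z)"
  by (rule sum_list_nonneg) (use jump_closed nonneg in fastforce)

lemma excess_rate_nonneg: "P s \<Longrightarrow> 0 \<le> (total_rate Q s - b) * V s"
  using jump_sum_le jump_sum_nonneg by fastforce

lemma exp_total_rate_le:
  assumes "P s" "0 \<le> t"
  shows "exp (- total_rate Q s * t) * V s \<le> exp (- b * t) * V s"
proof (cases "V s = 0")
  case False
  then have "b \<le> total_rate Q s"
    using excess_rate_nonneg[OF assms(1)] nonneg[OF assms(1)] by (simp add: zero_le_mult_iff)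
  then have "b * t \<le> total_rate Q s * t"
    using assms(2) by (rule mult_right_mono)
  then show ?thesis
    using nonneg[OF assms(1)] by (intro mult_right_mono) auto
qed simp

lemma first_jump_integrand_le:
  assumes "P s" and IH: "\<And>z. P z \<Longrightarrow> ctmc_iter Q f n v z \<le> ennreal (exp (- b * v) * V z)"
  shows "ennreal (exp (- total_rate Q s * u)) * (\<Sum>(r, z)\<leftarrow>Q s. ennreal r * ctmc_iter Q f n v z)
    \<le> ennreal (exp (- total_rate Q s * u) * (exp (- b * v) * ((total_rate Q s - b) * V s)))"
proof -
  have scale: "(\<Sum>(r, z)\<leftarrow>xs. r * (c * V z)) = c * (\<Sum>(r, z)\<leftarrow>xs. r * V z)" for xs c
    by (induction xs) (auto simp: algebra_simps)
  have bound: "(\<Sum>(r, z)\<leftarrow>Q s. r * (exp (- b * v) * V z)) \<le> exp (- b * v) * ((total_rate Q s - b) * V s)"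
    unfolding scale using jump_sum_le[OF assms(1)] by simp
  have "(\<Sum>(r, z)\<leftarrow>Q s. ennreal r * ctmc_iter Q f n v z) \<le> ennreal (exp (- b * v) * ((total_rate Q s - b) * V s))"
  proof (rule order_trans[OF sum_list_ennreal_le ennreal_leI[OF bound]])
    fix r z assume "(r, z) \<in> set (Q s)"
    with jump_closed[OF assms(1)] have "0 \<le> r" "P z" by auto
    then show "0 \<le> r \<and> 0 \<le> exp (- b * v) * V z \<and> ctmc_iter Q f n v z \<le> ennreal (exp (- b * v) * V z)"
      using IH nonneg by simp
  qed
  then show ?thesis
    by (simp add: ennreal_mult' mult_left_mono)
qed

lemma ctmc_iter_le:
  assumes f: "\<And>s. P s \<Longrightarrow> f s \<le> ennreal (V s)"
  shows "P s \<Longrightarrow> 0 \<le> t \<Longrightarrow> ctmc_iter Q f n t s \<le> ennreal (exp (- b * t) * V s)"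
proof (induction n arbitrary: t s)
  case 0
  have "ctmc_iter Q f 0 t s \<le> ennreal (exp (- total_rate Q s * t)) * ennreal (V s)"
    using f[OF 0(1)] by (simp add: mult_left_mono)
  also have "\<dots> \<le> ennreal (exp (- b * t) * V s)"
    using exp_total_rate_le[OF 0] by (simp add: ennreal_mult'[symmetric] ennreal_leI)
  finally show ?case .
next
  case (Suc n)
  define q where "q = total_rate Q s"
  define c where "c = V s * exp (- b * t)"
  have integrand:
    "indicator {0..t} u * ennreal (exp (- q * u)) * (\<Sum>(r, z)\<leftarrow>Q s. ennreal r * ctmc_iter Q f n (t - u) z)
      \<le> ennreal ((q - b) * c * exp (- (q - b) * u)) * indicator {0..t} u" for u
  proof (cases "u \<in> {0..t}")
    case True
    have "exp (- q * u) * (exp (- b * (t - u)) * ((q - b) * V s)) = (q - b) * c * exp (- (q - b) * u)"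
      unfolding c_def by (simp add: mult_exp_exp algebra_simps)
    moreover have "ennreal (exp (- q * u)) * (\<Sum>(r, z)\<leftarrow>Q s. ennreal r * ctmc_iter Q f n (t - u) z)
        \<le> ennreal (exp (- q * u) * (exp (- b * (t - u)) * ((q - b) * V s)))"
      unfolding q_def using True by (intro first_jump_integrand_le[OF Suc(2)] Suc.IH) auto
    moreover have "indicator {0..t} u = (1 :: ennreal)"
      using True by simp
    ultimately show ?thesis
      by (simp only: mult_1_left mult_1_right)
  qed simp
  have pos: "0 \<le> (q - b) * c"
    using excess_rate_nonneg[OF Suc(2)] unfolding q_def c_def by (simp add: mult.assoc[symmetric])
  have decayed: "c * exp (- (q - b) * t) = V s * exp (- q * t)"
    unfolding c_def by (simp add: mult.assoc mult_exp_exp algebra_simps)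
  have integral: "(\<integral>\<^sup>+u. ennreal ((q - b) * c * exp (- (q - b) * u)) * indicator {0..t} u \<partial>lborel)
      = ennreal (V s * exp (- b * t) - V s * exp (- q * t))"
    by (simp only: nn_integral_exp_decay[OF Suc(3) pos] decayed) (simp only: c_def)
  have "ctmc_iter Q f (Suc n) t s
      \<le> ennreal (exp (- q * t)) * ennreal (V s)
        + (\<integral>\<^sup>+u. ennreal ((q - b) * c * exp (- (q - b) * u)) * indicator {0..t} u \<partial>lborel)"
    unfolding ctmc_iter.simps q_def[symmetric]
    by (intro add_mono mult_left_mono nn_integral_mono integrand f Suc(2)) simp
  also have "\<dots> = ennreal (exp (- q * t) * V s) + ennreal (V s * exp (- b * t) - V s * exp (- q * t))"
    unfolding integral by (simp add: ennreal_mult')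
  also have "\<dots> = ennreal (exp (- b * t) * V s)"
    using exp_total_rate_le[OF Suc(2,3)] nonneg[OF Suc(2)] unfolding q_def
    by (subst ennreal_plus[symmetric]) (auto simp: mult.commute)
  finally show ?case .
qed

lemma ctmc_expect_le:
  assumes "\<And>s. P s \<Longrightarrow> f s \<le> ennreal (V s)" "P s" "0 \<le> t"
  shows "ctmc_expect Q f t s \<le> ennreal (exp (- b * t) * V s)"
  unfolding ctmc_expect_def using ctmc_iter_le[OF assms] by (rule SUP_least)

end

definition decay_rate :: "nat \<Rightarrow> real" where
  "decay_rate L = 1 / (real L + 1)^2"

definition weight :: "nat \<Rightarrow> nat \<Rightarrow> real" where
  "weight L d = (if d = 0 then 0 else 1 + real d * (2 * real L + 2 - real d) * decay_rate L)"

definition nat_dist :: "nat \<Rightarrow> nat \<Rightarrow> nat" where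
  "nat_dist a b = (if a \<le> b then b - a else a - b)"

lemma decay_rate_pos: "0 < decay_rate L"
  unfolding decay_rate_def by simp

lemma decay_rate_le_1: "decay_rate L \<le> 1"
  unfolding decay_rate_def by simp

lemma decay_rate_ge:
  assumes "0 < L"
  shows "1 / 4 * (1 / real L)^2 \<le> decay_rate L"
proof -
  have "0 \<le> (3 * real L + 1) * (real L - 1)"
    using assms by (intro mult_nonneg_nonneg) auto
  then have "(real L + 1)^2 \<le> 4 * (real L)^2"
    by (simp add: power2_eq_square algebra_simps)
  then show ?thesis
    using assms unfolding decay_rate_def by (simp add: power_divide frac_le)
qed

lemma weight_0 [simp]: "weight L 0 = 0"
  unfolding weight_def by simp

lemma weight_le_2: "weight L d \<le> 2"
proof -
  have "real d * (2 * real L + 2 - real d) = (real L + 1)^2 - (real L + 1 - real d)^2"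
    by (simp add: power2_eq_square algebra_simps)
  then have "real d * (2 * real L + 2 - real d) * decay_rate L \<le> (real L + 1)^2 * decay_rate L"
    using decay_rate_pos[of L] by (intro mult_right_mono) auto
  then show ?thesis
    unfolding weight_def by (simp add: decay_rate_def)
qed

lemma one_le_weight:
  assumes "1 \<le> d" "d \<le> L + 1"
  shows "1 \<le> weight L d"
  using assms decay_rate_pos[of L] unfolding weight_def by simp

lemma weight_nonneg: "d \<le> L + 1 \<Longrightarrow> 0 \<le> weight L d"
  using one_le_weight[of d L] by (cases "d = 0") auto

lemma weight_mono:
  assumes "a \<le> b" "b \<le> L + 1"
  shows "weight L a \<le> weight L b"
proof (cases "a = 0")
  case False
  have "real b * (2 * real L + 2 - real b) - real a * (2 * real L + 2 - real a)
        = (real b - real a) * (2 * real L + 2 - real a - real b)"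
    by (simp add: algebra_simps)
  also have "\<dots> \<ge> 0"
    using assms by (intro mult_nonneg_nonneg) auto
  finally show ?thesis
    using False assms decay_rate_pos[of L] unfolding weight_def by (auto intro: mult_right_mono)
qed (use weight_nonneg assms in auto)

lemma weight_second_difference:
  assumes "1 \<le> d" "d \<le> L"
  shows "weight L (d - 1) + weight L (d + 1) - 2 * weight L d \<le> - decay_rate L * weight L d"
proof (cases "d = 1")
  case True
  have "2 * real L + 1 \<le> (real L + 1)^2"
    by (simp add: power2_eq_square algebra_simps)
  then have "(2 * real L + 1) * decay_rate L \<le> 1"
    unfolding decay_rate_def by (simp add: divide_le_eq_1_pos)
  then have "decay_rate L * ((2 * real L + 1) * decay_rate L) \<le> decay_rate L"
    using decay_rate_pos[of L] by (simp add: mult_le_cancel_left1)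
  then show ?thesis
    using True decay_rate_le_1[of L] unfolding weight_def by (simp add: algebra_simps)
next
  case False
  then have "weight L (d - 1) + weight L (d + 1) - 2 * weight L d = - 2 * decay_rate L"
    using assms unfolding weight_def by (simp add: of_nat_diff algebra_simps)
  also have "\<dots> \<le> - decay_rate L * weight L d"
    using weight_le_2[of L d] decay_rate_pos[of L] by (simp add: mult_le_cancel_left1 mult.commute)
  finally show ?thesis .
qed

(* A step suppressed at the boundary leaves the distance unchanged, which is still at most d + 1. *)

lemma weight_drift_independent_walks:
  assumes "a \<noteq> b" "a \<le> L" "b \<le> L"
  shows "(weight L (nat_dist (step_pos L a True) b) + weight L (nat_dist (step_pos L a False) b)) / 2
           - weight L (nat_dist a b)
       + ((weight L (nat_dist a (step_pos L b True)) + weight L (nat_dist a (step_pos L b False))) / 2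
           - weight L (nat_dist a b))
       \<le> - decay_rate L * weight L (nat_dist a b)"
proof -
  have ordered: "weight L (nat_dist (step_pos L a True) b) + weight L (nat_dist (step_pos L a False) b)
       + weight L (nat_dist a (step_pos L b True)) + weight L (nat_dist a (step_pos L b False))
     \<le> 2 * weight L (nat_dist a b - 1) + 2 * weight L (nat_dist a b + 1)"
    if "a < b" "b \<le> L" for a b
  proof -
    have "nat_dist (step_pos L a True) b = nat_dist a b - 1"
      "nat_dist a (step_pos L b False) = nat_dist a b - 1"
      "nat_dist (step_pos L a False) b \<le> nat_dist a b + 1"
      "nat_dist a (step_pos L b True) \<le> nat_dist a b + 1"
      "nat_dist a b + 1 \<le> L + 1"
      using that unfolding nat_dist_def step_pos_def by auto
    then show ?thesis
      using weight_mono by (smt (verit))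
  qed
  have "weight L (nat_dist (step_pos L a True) b) + weight L (nat_dist (step_pos L a False) b)
       + weight L (nat_dist a (step_pos L b True)) + weight L (nat_dist a (step_pos L b False))
     \<le> 2 * weight L (nat_dist a b - 1) + 2 * weight L (nat_dist a b + 1)"
  proof (cases "a < b")
    case False
    have "nat_dist u v = nat_dist v u" for u v
      unfolding nat_dist_def by auto
    with ordered[of b a] False assms show ?thesis by simp
  qed (use ordered assms in blast)
  moreover have "weight L (nat_dist a b - 1) + weight L (nat_dist a b + 1) - 2 * weight L (nat_dist a b)
      \<le> - decay_rate L * weight L (nat_dist a b)"
    using assms by (intro weight_second_difference) (auto simp: nat_dist_def)
  ultimately show ?thesis by (simp add: field_simps)
qed

lemma weight_cross_le:
  assumes "a' \<le> a" "b \<le> b'" "a \<le> L" "b' \<le> L"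
  shows "weight L (nat_dist a' b) \<le> weight L (nat_dist a b) + weight L (nat_dist a' b')"
proof -
  have le_L: "nat_dist u v \<le> L + 1" if "u \<le> L" "v \<le> L" for u v
    using that unfolding nat_dist_def by auto
  consider "a = b" | "a' = b'" | "a \<noteq> b" "a' \<noteq> b'" by blast
  then show ?thesis
  proof cases
    case 1
    then have "weight L (nat_dist a' b) \<le> weight L (nat_dist a' b')"
      using assms by (intro weight_mono le_L) (auto simp: nat_dist_def)
    with 1 show ?thesis by (simp add: nat_dist_def)
  next
    case 2
    then have "weight L (nat_dist a' b) \<le> weight L (nat_dist a b)"
      using assms by (intro weight_mono le_L) (auto simp: nat_dist_def)
    with 2 show ?thesis by (simp add: nat_dist_def)
  next
    case 3
    then have "1 \<le> weight L (nat_dist a b)" "1 \<le> weight L (nat_dist a' b')"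
      using assms by (auto intro!: one_le_weight le_L simp: nat_dist_def)
    then show ?thesis using weight_le_2[of L "nat_dist a' b"] by linarith
  qed
qed

definition potential :: "nat \<Rightarrow> cstate \<Rightarrow> real" where
  "potential L s = (case s of (x, I, y, J, N) \<Rightarrow> \<Sum>i\<in>I. weight L (nat_dist (x i) (y i)))"

definition admissible :: "nat \<Rightarrow> cstate \<Rightarrow> bool" where
  "admissible L s = (case s of (x, I, y, J, N) \<Rightarrow>
      finite J \<and> I \<subseteq> J \<and> (\<forall>i\<in>I. x i \<le> L) \<and> (\<forall>i\<in>J. y i \<le> L))"

lemma nat_dist_self [simp]: "nat_dist a a = 0"
  unfolding nat_dist_def by simp

lemma nat_dist_le: "a \<le> L \<Longrightarrow> b \<le> L \<Longrightarrow> nat_dist a b \<le> L"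
  unfolding nat_dist_def by auto

lemma step_pos_le: "p \<le> L \<Longrightarrow> step_pos L p up \<le> L"
  unfolding step_pos_def by auto

lemma admissible_weight_nonneg:
  "admissible L (x, I, y, J, N) \<Longrightarrow> i \<in> I \<Longrightarrow> 0 \<le> weight L (nat_dist (x i) (y i))"
  unfolding admissible_def by (auto intro!: weight_nonneg le_SucI nat_dist_le)

lemma potential_nonneg:
  assumes "admissible L s"
  shows "0 \<le> potential L s"
proof -
  obtain x I y J N where s: "s = (x, I, y, J, N)" by (cases s)
  show ?thesis
    using admissible_weight_nonneg[of L x I y J N] assms unfolding s potential_def
    by (auto intro: sum_nonneg)
qed

lemma card_D_ne_le_potential:
  assumes "admissible L s"
  shows "real (card (D_ne s)) \<le> potential L s"
proof -
  obtain x I y J N where s: "s = (x, I, y, J, N)" by (cases s)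
  have fin: "finite I" and bounds: "\<forall>i\<in>I. x i \<le> L \<and> y i \<le> L"
    using assms unfolding admissible_def s by (auto intro: finite_subset)
  have "real (card {i \<in> I. x i \<noteq> y i}) = (\<Sum>i | i \<in> I \<and> x i \<noteq> y i. 1)"
    by simp
  also have "\<dots> \<le> (\<Sum>i | i \<in> I \<and> x i \<noteq> y i. weight L (nat_dist (x i) (y i)))"
    using bounds by (intro sum_mono one_le_weight) (auto simp: nat_dist_def)
  also have "\<dots> \<le> (\<Sum>i\<in>I. weight L (nat_dist (x i) (y i)))"
    using fin assms unfolding s by (intro sum_mono2 admissible_weight_nonneg) auto
  finally show ?thesis
    unfolding s D_ne_def potential_def by simp
qed

lemma potential_update:
  assumes "finite I" "i \<in> I" "\<forall>k \<in> I - {i}. x' k = x k \<and> y' k = y k"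
  shows "potential L (x', I, y', J', N') =
    potential L (x, I, y, J, N) - weight L (nat_dist (x i) (y i)) + weight L (nat_dist (x' i) (y' i))"
proof -
  have "(\<Sum>k\<in>I - {i}. weight L (nat_dist (x' k) (y' k))) = (\<Sum>k\<in>I - {i}. weight L (nat_dist (x k) (y k)))"
    using assms(3) by (intro sum.cong) auto
  then show ?thesis
    using assms(1,2) unfolding potential_def by (simp add: sum.remove)
qed

lemma potential_upd_x:
  "finite I \<Longrightarrow> i \<in> I \<Longrightarrow> potential L (x(i := p), I, y, J, N) =
    potential L (x, I, y, J, N) - weight L (nat_dist (x i) (y i)) + weight L (nat_dist p (y i))"
  by (subst potential_update[where i = i]) auto

lemma potential_upd_y:
  "finite I \<Longrightarrow> i \<in> I \<Longrightarrow> potential L (x, I, y(i := q), J, N) =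
    potential L (x, I, y, J, N) - weight L (nat_dist (x i) (y i)) + weight L (nat_dist (x i) q)"
  by (subst potential_update[where i = i]) auto

lemma potential_upd_y_outside:
  "i \<notin> I \<Longrightarrow> potential L (x, I, y(i := q), J, N) = potential L (x, I, y, J, N)"
  unfolding potential_def by (auto intro!: sum.cong)

lemma potential_upd_xy:
  "finite I \<Longrightarrow> i \<in> I \<Longrightarrow> potential L (x(i := p), I, y(i := q), J, N) =
    potential L (x, I, y, J, N) - weight L (nat_dist (x i) (y i)) + weight L (nat_dist p q)"
  by (subst potential_update[where i = i]) auto

lemma potential_remove_label:
  "finite I \<Longrightarrow> i \<in> I \<Longrightarrow>
    potential L (x, I - {i}, y, J', N') = potential L (x, I, y, J, N) - weight L (nat_dist (x i) (y i))"
  unfolding potential_def by (simp add: sum.remove)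

lemma potential_relabel:
  assumes "finite I" "i \<in> I" "k \<in> I" "i \<noteq> k"
  shows "potential L (x, I - {i}, y(k := y i), J', N') = potential L (x, I, y, J, N)
      - weight L (nat_dist (x i) (y i)) - weight L (nat_dist (x k) (y k)) + weight L (nat_dist (x k) (y i))"
    and "potential L (x(i := x k), I - {k}, y, J', N') = potential L (x, I, y, J, N)
      - weight L (nat_dist (x i) (y i)) - weight L (nat_dist (x k) (y k)) + weight L (nat_dist (x k) (y i))"
proof -
  have "potential L (x, I - {i}, y(k := y i), J', N') = potential L (x, I - {i}, y, J', N')
      - weight L (nat_dist (x k) (y k)) + weight L (nat_dist (x k) (y i))"
    "potential L (x(i := x k), I - {k}, y, J', N') = potential L (x, I - {k}, y, J', N')
      - weight L (nat_dist (x i) (y i)) + weight L (nat_dist (x k) (y i))"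
    using assms by (subst potential_update[where i = k], auto, subst potential_update[where i = i], auto)
  moreover have "potential L (x, I - {i}, y, J', N') = potential L (x, I, y, J, N) - weight L (nat_dist (x i) (y i))"
    "potential L (x, I - {k}, y, J', N') = potential L (x, I, y, J, N) - weight L (nat_dist (x k) (y k))"
    using assms by (simp_all add: potential_remove_label)
  ultimately show "potential L (x, I - {i}, y(k := y i), J', N') = potential L (x, I, y, J, N)
      - weight L (nat_dist (x i) (y i)) - weight L (nat_dist (x k) (y k)) + weight L (nat_dist (x k) (y i))"
    and "potential L (x(i := x k), I - {k}, y, J', N') = potential L (x, I, y, J, N)
      - weight L (nat_dist (x i) (y i)) - weight L (nat_dist (x k) (y k)) + weight L (nat_dist (x k) (y i))"
    by simp_all
qed

lemma sum_list_symmetric_moves: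
  fixes \<Phi> :: "'s \<Rightarrow> real"
  shows "finite A \<Longrightarrow>
    (\<Sum>(r, z)\<leftarrow>concat (map (\<lambda>i. map (\<lambda>up. (1/2, M i up)) [True, False]) (sorted_list_of_set A)).
        r * (\<Phi> z - c))
    = (\<Sum>i\<in>A. (\<Phi> (M i True) + \<Phi> (M i False)) / 2 - c)"
proof -
  have "(\<Sum>(r, z)\<leftarrow>concat (map (\<lambda>i. map (\<lambda>up. (1/2, M i up)) [True, False]) xs). r * (\<Phi> z - c))
      = (\<Sum>i\<leftarrow>xs. (\<Phi> (M i True) + \<Phi> (M i False)) / 2 - c)" for xs
    by (induction xs) (auto simp: field_simps)
  then show "finite A \<Longrightarrow> ?thesis"
    by (simp add: sum_list_distinct_conv_sum_set)
qed

lemma rlab_mem_max: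
  assumes "finite I" "I \<noteq> {}"
  shows "rlab x I \<in> I" "\<And>l. l \<in> I \<Longrightarrow> x l \<le> x (rlab x I)"
proof -
  have "Max (x ` I) \<in> x ` I"
    using assms by simp
  then have "rlab x I \<in> {i \<in> I. x i = Max (x ` I)}"
    unfolding rlab_def using assms(1) by (intro Max_in) auto
  then show "rlab x I \<in> I" "\<And>l. l \<in> I \<Longrightarrow> x l \<le> x (rlab x I)"
    using assms by auto
qed

lemma remove_eq:
  assumes "finite J" "I \<subseteq> J" "I \<noteq> {}"
  shows "remove (x, I, y, J, N) =
    (if rlab y J \<in> I \<and> rlab x I \<noteq> rlab y J then
       if x (rlab y J) \<le> y (rlab x I)
       then (x, I - {rlab x I}, y(rlab y J := y (rlab x I)), J - {rlab x I}, N)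
       else (x(rlab x I := x (rlab y J)), I - {rlab y J}, y, J - {rlab y J}, N)
     else (x, I - {rlab x I}, y, J - {rlab y J}, N))"
proof -
  have "rlab x I \<in> I" "rlab y J \<in> J"
    using assms rlab_mem_max(1)[of I x] rlab_mem_max(1)[of J y] by (auto intro: finite_subset)
  with assms(3) show ?thesis
    unfolding remove_def Let_def by auto
qed

lemma admissible_remove:
  assumes "admissible L (x, I, y, J, N)"
  shows "admissible L (remove (x, I, y, J, N))"
proof (cases "I = {}")
  case True
  with assms show ?thesis
    unfolding remove_def admissible_def by auto
next
  case False
  with assms have "rlab x I \<in> I"
    unfolding admissible_def by (intro rlab_mem_max) (auto intro: finite_subset)
  with assms False show ?thesis
    unfolding admissible_def by (subst remove_eq) auto
qed

lemma admissible_jump: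
  assumes "admissible L s" "0 \<le> j" "(r, z) \<in> set (coupled_jumps L j s)"
  shows "0 \<le> r \<and> admissible L z"
proof -
  obtain x I y J N where s: "s = (x, I, y, J, N)" by (cases s)
  have "finite I"
    using assms(1) unfolding admissible_def s by (auto intro: finite_subset)
  moreover have "admissible L (create s)" "admissible L (remove s)"
    using assms(1) admissible_remove unfolding s by (auto simp: admissible_def create_def)
  ultimately show ?thesis
    using assms unfolding coupled_jumps_def s Let_def
    by (auto simp: admissible_def step_pos_le)
qed

lemma potential_create_le:
  assumes "admissible L (x, I, y, J, N)"
  shows "potential L (create (x, I, y, J, N)) \<le> potential L (x, I, y, J, N)"
proof -
  have fin: "finite I"
    using assms unfolding admissible_def by (auto intro: finite_subset)
  have "potential L (create (x, I, y, J, N))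
      = (\<Sum>k\<in>insert (N + 1) I. weight L (nat_dist ((x(N + 1 := 0)) k) ((y(N + 1 := 0)) k)))"
    unfolding create_def potential_def by simp
  also have "\<dots> = (\<Sum>k\<in>I - {N + 1}. weight L (nat_dist (x k) (y k)))"
    using fin by (simp add: sum.insert_remove)
  also have "\<dots> \<le> (\<Sum>k\<in>I. weight L (nat_dist (x k) (y k)))"
    using fin by (intro sum_mono2 admissible_weight_nonneg[OF assms]) auto
  finally show ?thesis
    by (simp add: potential_def)
qed

(* In the relabelling cases the discrepancies of i and k are replaced by |x k - y i|, which
   weight_cross_le bounds since x k <= x i and y i <= y k (i and k are rightmost). *)

lemma potential_remove_le:
  assumes adm: "admissible L (x, I, y, J, N)"
  shows "potential L (remove (x, I, y, J, N)) \<le> potential L (x, I, y, J, N)"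
proof (cases "I = {}")
  case True
  then show ?thesis unfolding remove_def by (auto simp: potential_def)
next
  case False
  have fJ: "finite J" and IJ: "I \<subseteq> J" and xL: "\<forall>i\<in>I. x i \<le> L" and yL: "\<forall>i\<in>J. y i \<le> L"
    using adm unfolding admissible_def by auto
  have fI: "finite I" using fJ IJ by (rule finite_subset[rotated])
  define i where "i = rlab x I"
  define k where "k = rlab y J"
  define w where "w a b = weight L (nat_dist a b)" for a b
  have iI: "i \<in> I" and xmax: "\<And>l. l \<in> I \<Longrightarrow> x l \<le> x i"
    using rlab_mem_max[OF fI False] unfolding i_def by auto
  have ymax: "\<And>l. l \<in> J \<Longrightarrow> y l \<le> y k"
    using rlab_mem_max[OF fJ] False IJ unfolding k_def by auto
  have remove: "remove (x, I, y, J, N) =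
    (if k \<in> I \<and> i \<noteq> k then
       if x k \<le> y i then (x, I - {i}, y(k := y i), J - {i}, N) else (x(i := x k), I - {k}, y, J - {k}, N)
     else (x, I - {i}, y, J - {k}, N))"
    unfolding i_def k_def using fJ IJ False by (rule remove_eq)
  show ?thesis
  proof (cases "k \<in> I \<and> i \<noteq> k")
    case relabel: True
    have "w (x k) (y i) \<le> w (x i) (y i) + w (x k) (y k)"
      unfolding w_def using relabel iI IJ xL yL xmax ymax by (intro weight_cross_le) auto
    moreover have "k \<in> I" "i \<noteq> k"
      using relabel by auto
    ultimately show ?thesis
      using potential_relabel[OF fI iI \<open>k \<in> I\<close> \<open>i \<noteq> k\<close>, where J = J and N = N]
      unfolding remove w_def by auto
  next
    case False
    have "0 \<le> w (x i) (y i)"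
      unfolding w_def using adm iI by (rule admissible_weight_nonneg)
    moreover have "remove (x, I, y, J, N) = (x, I - {i}, y, J - {k}, N)"
      using False unfolding remove by simp
    ultimately show ?thesis
      using potential_remove_label[OF fI iI, of L x y "J - {k}" N J N] by (simp add: w_def)
  qed
qed

definition walk_drift :: "nat \<Rightarrow> (cstate \<Rightarrow> real) \<Rightarrow> cstate \<Rightarrow> real" where
  "walk_drift L \<Phi> s = (case s of (x, I, y, J, N) \<Rightarrow> let E = {i \<in> I. x i = y i} in
      (\<Sum>i\<in>I - E. (\<Phi> (x(i := step_pos L (x i) True), I, y, J, N)
                    + \<Phi> (x(i := step_pos L (x i) False), I, y, J, N)) / 2 - \<Phi> s)
    + (\<Sum>i\<in>J - E. (\<Phi> (x, I, y(i := step_pos L (y i) True), J, N)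
                    + \<Phi> (x, I, y(i := step_pos L (y i) False), J, N)) / 2 - \<Phi> s)
    + (\<Sum>i\<in>E. (\<Phi> (x(i := step_pos L (x i) True), I, y(i := step_pos L (x i) True), J, N)
                + \<Phi> (x(i := step_pos L (x i) False), I, y(i := step_pos L (x i) False), J, N)) / 2 - \<Phi> s))"

lemma coupled_generator:
  assumes "finite I" "finite J"
  shows "(\<Sum>(r, z)\<leftarrow>coupled_jumps L j (x, I, y, J, N). r * (\<Phi> z - \<Phi> (x, I, y, J, N)))
    = walk_drift L \<Phi> (x, I, y, J, N)
      + j / real L * (\<Phi> (create (x, I, y, J, N)) - \<Phi> (x, I, y, J, N))
      + j / real L * (\<Phi> (remove (x, I, y, J, N)) - \<Phi> (x, I, y, J, N))"
proof -
  define E where "E = {i \<in> I. x i = y i}"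
  have "finite (I - E)" "finite (J - E)" "finite E"
    using assms unfolding E_def by auto
  then show ?thesis
    unfolding coupled_jumps_def walk_drift_def prod.case Let_def E_def[symmetric] map_append sum_list_append
      sum_list_symmetric_moves[OF \<open>finite (I - E)\<close>] sum_list_symmetric_moves[OF \<open>finite (J - E)\<close>]
      sum_list_symmetric_moves[OF \<open>finite E\<close>]
    by (simp add: add.assoc)
qed

lemma walk_drift_potential:
  assumes adm: "admissible L (x, I, y, J, N)"
  shows "walk_drift L (potential L) (x, I, y, J, N) \<le> - decay_rate L * potential L (x, I, y, J, N)"
proof -
  have fJ: "finite J" and IJ: "I \<subseteq> J" and xL: "\<forall>i\<in>I. x i \<le> L" and yL: "\<forall>i\<in>J. y i \<le> L"
    using adm unfolding admissible_def by auto
  have fI: "finite I" using fJ IJ by (rule finite_subset[rotated])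
  define E where "E = {i \<in> I. x i = y i}"
  define w where "w i = weight L (nat_dist (x i) (y i))" for i
  define \<Phi> where "\<Phi> = potential L"
  define \<Phi>\<^sub>0 where "\<Phi>\<^sub>0 = \<Phi> (x, I, y, J, N)"
  define x_step where "x_step i up = (x(i := step_pos L (x i) up), I, y, J, N)" for i up
  define y_step where "y_step i up = (x, I, y(i := step_pos L (y i) up), J, N)" for i up
  define joint_step where
    "joint_step i up = (x(i := step_pos L (x i) up), I, y(i := step_pos L (x i) up), J, N)" for i up
  have x_sum: "(\<Sum>i\<in>I - E. (\<Phi> (x_step i True) + \<Phi> (x_step i False)) / 2 - \<Phi>\<^sub>0)
    = (\<Sum>i\<in>I - E. (weight L (nat_dist (step_pos L (x i) True) (y i))
                   + weight L (nat_dist (step_pos L (x i) False) (y i))) / 2 - w i)"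
    unfolding x_step_def \<Phi>\<^sub>0_def \<Phi>_def w_def using fI
    by (intro sum.cong) (auto simp: potential_upd_x field_simps)
  have y_sum: "(\<Sum>i\<in>J - E. (\<Phi> (y_step i True) + \<Phi> (y_step i False)) / 2 - \<Phi>\<^sub>0)
    = (\<Sum>i\<in>I - E. (weight L (nat_dist (x i) (step_pos L (y i) True))
                   + weight L (nat_dist (x i) (step_pos L (y i) False))) / 2 - w i)"
  proof (rule sum.mono_neutral_cong_right)
    show "\<forall>i\<in>J - E - (I - E). (\<Phi> (y_step i True) + \<Phi> (y_step i False)) / 2 - \<Phi>\<^sub>0 = 0"
      unfolding y_step_def \<Phi>\<^sub>0_def \<Phi>_def E_def by (auto simp: potential_upd_y_outside)
  qed (use fJ IJ fI in \<open>auto simp: y_step_def \<Phi>\<^sub>0_def \<Phi>_def w_def potential_upd_y field_simps\<close>)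
  have joint_sum: "(\<Sum>i\<in>E. (\<Phi> (joint_step i True) + \<Phi> (joint_step i False)) / 2 - \<Phi>\<^sub>0) = 0"
    unfolding joint_step_def \<Phi>\<^sub>0_def \<Phi>_def using fI
    by (intro sum.neutral) (auto simp: E_def potential_upd_xy)
  have "(\<Sum>i\<in>I - E. w i) = (\<Sum>i\<in>I. w i)"
    using fI by (intro sum.mono_neutral_left) (auto simp: E_def w_def)
  then have "(\<Sum>i\<in>I - E. - decay_rate L * w i) = - decay_rate L * \<Phi>\<^sub>0"
    unfolding \<Phi>\<^sub>0_def \<Phi>_def potential_def w_def by (simp add: sum_negf flip: sum_distrib_left)
  moreover have "walk_drift L \<Phi> (x, I, y, J, N) \<le> (\<Sum>i\<in>I - E. - decay_rate L * w i)"
    unfolding walk_drift_def prod.case Let_def E_def[symmetric] \<Phi>\<^sub>0_def[symmetric]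
      x_step_def[symmetric] y_step_def[symmetric] joint_step_def[symmetric] x_sum y_sum joint_sum
    unfolding w_def E_def add_0_right sum.distrib[symmetric] using xL yL IJ
    by (intro sum_mono weight_drift_independent_walks) auto
  ultimately show ?thesis
    unfolding \<Phi>\<^sub>0_def \<Phi>_def by simp
qed

lemma coupled_drift:
  assumes adm: "admissible L (x, I, y, J, N)" and "0 \<le> j"
  shows "(\<Sum>(r, z)\<leftarrow>coupled_jumps L j (x, I, y, J, N). r * (potential L z - potential L (x, I, y, J, N)))
    \<le> - decay_rate L * potential L (x, I, y, J, N)"
proof -
  have "finite I" "finite J"
    using adm unfolding admissible_def by (auto intro: finite_subset)
  moreover have "j / real L * (potential L (create (x, I, y, J, N)) - potential L (x, I, y, J, N)) \<le> 0"
    using potential_create_le[OF adm] \<open>0 \<le> j\<close> by (intro mult_nonneg_nonpos) auto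
  moreover have "j / real L * (potential L (remove (x, I, y, J, N)) - potential L (x, I, y, J, N)) \<le> 0"
    using potential_remove_le[OF adm] \<open>0 \<le> j\<close> by (intro mult_nonneg_nonpos) auto
  ultimately show ?thesis
    using walk_drift_potential[OF adm] by (simp add: coupled_generator)
qed

lemma ctmc_lyapunov_coupled:
  "0 \<le> j \<Longrightarrow> ctmc_lyapunov (coupled_jumps L j) (admissible L) (potential L) (decay_rate L)"
  by unfold_locales (auto dest: admissible_jump intro: potential_nonneg simp: coupled_drift[simplified])

lemma potential_le_twice_card: "potential L (x, I, y, J, N) \<le> 2 * real (card I)"
proof -
  have "(\<Sum>i\<in>I. weight L (nat_dist (x i) (y i))) \<le> (\<Sum>i\<in>I. 2)"
    by (intro sum_mono weight_le_2)
  then show ?thesis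
    unfolding potential_def by simp
qed

lemma expect_card_D_ne_le:
  assumes "0 \<le> j" "0 < L" "0 \<le> t" and adm: "admissible L (x, I, y, J, N)"
  shows "ctmc_expect (coupled_jumps L j) (\<lambda>s. of_nat (card (D_ne s))) t (x, I, y, J, N)
    \<le> ennreal (2 * real (card I) * exp (- (1 / 4) * (1 / real L)^2 * t))"
proof -
  have "ctmc_expect (coupled_jumps L j) (\<lambda>s. of_nat (card (D_ne s))) t (x, I, y, J, N)
      \<le> ennreal (exp (- decay_rate L * t) * potential L (x, I, y, J, N))"
    using assms by (intro ctmc_lyapunov.ctmc_expect_le[OF ctmc_lyapunov_coupled])
      (auto simp: ennreal_of_nat_eq_real_of_nat intro!: ennreal_leI card_D_ne_le_potential)
  also have "\<dots> \<le> ennreal (exp (- (1 / 4) * (1 / real L)^2 * t) * (2 * real (card I)))"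
  proof (intro ennreal_leI mult_mono)
    show "exp (- decay_rate L * t) \<le> exp (- (1 / 4) * (1 / real L)^2 * t)"
      using mult_right_mono[OF decay_rate_ge[OF \<open>0 < L\<close>] \<open>0 \<le> t\<close>] by simp
  qed (use potential_nonneg[OF adm] potential_le_twice_card in auto)
  finally show ?thesis
    by (simp add: mult.commute)
qed

theorem theorem4p6:
  fixes j :: real
  assumes "j > 0"
  shows "\<exists>c > 0. \<exists>b > 0. \<forall>(L::nat) (t::real) (n::nat) (m::nat) (x0::nat \<Rightarrow> nat) (y0::nat \<Rightarrow> nat).
           L > 0 \<longrightarrow> t \<ge> 0 \<longrightarrow> n > 0 \<longrightarrow>
           (\<forall>i \<in> {1..n}. x0 i \<le> L) \<longrightarrow> (\<forall>i \<in> {1..n+m}. y0 i \<le> L) \<longrightarrow>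
           ctmc_expect (coupled_jumps L j) (\<lambda>s. of_nat (card (D_ne s))) t
               (x0, {1..n}, y0, {1..n+m}, n+m)
             \<le> ennreal (c * real n * exp (- b * (1 / real L)^2 * t))"
proof -
  have "ctmc_expect (coupled_jumps L j) (\<lambda>s. of_nat (card (D_ne s))) t (x0, {1..n}, y0, {1..n+m}, n+m)
      \<le> ennreal (2 * real n * exp (- (1 / 4) * (1 / real L)^2 * t))"
    if "L > 0" "t \<ge> 0" "\<forall>i \<in> {1..n}. x0 i \<le> L" "\<forall>i \<in> {1..n+m}. y0 i \<le> L" for L t n m x0 y0
  proof -
    have "admissible L (x0, {1..n}, y0, {1..n+m}, n+m)"
      using that unfolding admissible_def by auto
    with assms that have "ctmc_expect (coupled_jumps L j) (\<lambda>s. of_nat (card (D_ne s))) t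
        (x0, {1..n}, y0, {1..n+m}, n+m) \<le> ennreal (2 * real (card {1..n}) * exp (- (1 / 4) * (1 / real L)^2 * t))"
      by (intro expect_card_D_ne_le) auto
    then show ?thesis
      by simp
  qed
  then show ?thesis
    by (intro exI[of _ "2 :: real"] conjI exI[of _ "1 / 4 :: real"] allI impI) auto
qed

end
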